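(* Let $n\ge 3$ and let $\gamma,\delta\in\mathbb{R}$ be arbitrary. Define $P(\rho) = -\frac{2n+\delta}{n(n-1)} + \frac{(\delta-\gamma)\rho}{n(n+1)} + \frac{\gamma\rho^2}{(n+1)(n+2)}$, $\alpha = -1 - \frac{\delta}{n(n+1)} - \frac{\gamma}{(n+1)(n+2)}$, $\beta = \frac{n+1}{n-1} + \frac{\delta}{n(n-1)} + \frac{\gamma}{n(n+1)}$, and $Q(\rho) = \rho^{n-1} - \rho^n - \rho^nP(\rho) - \alpha - \beta\rho$. Then: (1) the polynomial $\rho^{n+1} - \rho^n + \rho^nP(\rho) + \alpha + \beta\rho$ has a zero of order at least $3$ at $\rho=1$; (2) $Q(1) = Q'(1) = 0$ and $Q''(1) = 2$; in particular $Q$ has a zero of order exactly $2$ at $\rho=1$. In particular, $\rho=1$ is a removable singularity of the rational function $h''(\rho) = \frac{\rho^{n+1} - \rho^n + \rho^nP(\rho) + \alpha + \beta\rho}{(1-\rho)\rho\,Q(\rho)}$. *)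

theory Defs
  imports Complex_Main "HOL-Computational_Algebra.Polynomial"
begin

definition Ppoly :: "nat \<Rightarrow> real \<Rightarrow> real \<Rightarrow> real poly" where
  "Ppoly n \<gamma> \<delta> =
     [: - (2 * real n + \<delta>) / (real n * (real n - 1)),
        (\<delta> - \<gamma>) / (real n * (real n + 1)),
        \<gamma> / ((real n + 1) * (real n + 2)) :]"

definition alpha :: "nat \<Rightarrow> real \<Rightarrow> real \<Rightarrow> real" where
  "alpha n \<gamma> \<delta> = -1 - \<delta> / (real n * (real n + 1)) - \<gamma> / ((real n + 1) * (real n + 2))"

definition beta :: "nat \<Rightarrow> real \<Rightarrow> real \<Rightarrow> real" where
  "beta n \<gamma> \<delta> = (real n + 1) / (real n - 1) + \<delta> / (real n * (real n - 1))
                    + \<gamma> / (real n * (real n + 1))"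

definition Npoly :: "nat \<Rightarrow> real \<Rightarrow> real \<Rightarrow> real poly" where
  "Npoly n \<gamma> \<delta> = monom 1 (n + 1) - monom 1 n + monom 1 n * Ppoly n \<gamma> \<delta>
                    + [: alpha n \<gamma> \<delta>, beta n \<gamma> \<delta> :]"

definition Qpoly :: "nat \<Rightarrow> real \<Rightarrow> real \<Rightarrow> real poly" where
  "Qpoly n \<gamma> \<delta> = monom 1 (n - 1) - monom 1 n - monom 1 n * Ppoly n \<gamma> \<delta>
                    - [: alpha n \<gamma> \<delta>, beta n \<gamma> \<delta> :]"

end

theory Submission
  imports Defs
begin

text \<open>
  The two polynomials are complementary: \<open>N + Q = \<rho>^(n-1) (\<rho> - 1)^2\<close>.
  A direct computation gives \<open>Q(1) = Q'(1) = 0\<close> and \<open>Q''(1) = 2\<close>, so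
  \<open>Q = (\<rho> - 1)^2 R\<close> with \<open>R(1) = 1\<close>. Hence \<open>N = (\<rho> - 1)^2 (\<rho>^(n-1) - R)\<close>, and
  the second factor vanishes at 1, giving the triple zero \<open>N = (\<rho> - 1)^3 S\<close>. The
  quotient \<open>N / ((1 - \<rho>) \<rho> Q)\<close> then agrees off 1 with \<open>-S / (\<rho> R)\<close>, continuous at 1.
\<close>

lemma double_root_factor:
  fixes p :: "'a::idom poly"
  assumes "poly p a = 0" and "poly (pderiv p) a = 0"
  obtains r where "p = [:-a, 1:] ^ 2 * r" and "poly (pderiv (pderiv p)) a = 2 * poly r a"
proof -
  obtain q where q: "p = [:-a, 1:] * q"
    using assms(1) by (auto simp: poly_eq_0_iff_dvd)
  have "poly q a = 0"
    using assms(2) unfolding q pderiv_mult by (simp add: pderiv_pCons)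
  then obtain r where r: "q = [:-a, 1:] * r"
    by (auto simp: poly_eq_0_iff_dvd)
  show thesis
  proof
    show "p = [:-a, 1:] ^ 2 * r"
      unfolding q r power2_eq_square by (simp only: mult.assoc)
    show "poly (pderiv (pderiv p)) a = 2 * poly r a"
      unfolding q r by (simp only: pderiv_mult pderiv_add) (simp add: pderiv_pCons)
  qed
qed

lemma order_square_factor:
  fixes r :: "'a::idom poly"
  assumes "poly r a \<noteq> 0"
  shows "order a ([:-a, 1:] ^ 2 * r) = 2"
proof -
  have "r \<noteq> 0" using assms by auto
  then have "order a ([:-a, 1:] ^ 2 * r) = order a ([:-a, 1:] ^ 2) + order a r"
    by (simp add: order_mult)
  also have "\<dots> = 2"
    using assms by (simp add: order_power_n_n order_0I)
  finally show ?thesis .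
qed

lemma poly_pderiv_monom_mult_at_1:
  fixes G :: "'a::idom poly"
  shows "poly (pderiv (monom 1 k * G)) 1 = of_nat k * poly G 1 + poly (pderiv G) 1"
  by (simp add: pderiv_mult pderiv_monom poly_monom)

lemma poly_pderiv2_monom_mult_at_1:
  fixes G :: "'a::idom poly"
  shows "poly (pderiv (pderiv (monom 1 k * G))) 1
    = of_nat k * (of_nat k - 1) * poly G 1 + 2 * of_nat k * poly (pderiv G) 1
      + poly (pderiv (pderiv G)) 1"
  by (cases k) (simp_all add: pderiv_mult pderiv_add pderiv_monom poly_monom algebra_simps)

text \<open>The factor \<open>* 1\<close> puts both monomials in the shape \<open>monom 1 k * G\<close> handled above.\<close>

lemma Qpoly_eq_monom_mult:
  "Qpoly n \<gamma> \<delta> = monom 1 (n - 1) * 1 - monom 1 n * (1 + Ppoly n \<gamma> \<delta>)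
     - [:alpha n \<gamma> \<delta>, beta n \<gamma> \<delta>:]"
  unfolding Qpoly_def by (simp add: algebra_simps)

lemma Ppoly_at_1:
  "poly (Ppoly n \<gamma> \<delta>) 1 = - (2 * real n + \<delta>) / (real n * (real n - 1))
     + (\<delta> - \<gamma>) / (real n * (real n + 1)) + \<gamma> / ((real n + 1) * (real n + 2))"
  "poly (pderiv (Ppoly n \<gamma> \<delta>)) 1
     = (\<delta> - \<gamma>) / (real n * (real n + 1)) + 2 * \<gamma> / ((real n + 1) * (real n + 2))"
  "poly (pderiv (pderiv (Ppoly n \<gamma> \<delta>))) 1 = 2 * \<gamma> / ((real n + 1) * (real n + 2))"
  by (simp_all add: Ppoly_def pderiv_pCons)

lemma Qpoly_at_1:
  assumes "n \<ge> 3"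
  shows "poly (Qpoly n \<gamma> \<delta>) 1 = 0"
    and "poly (pderiv (Qpoly n \<gamma> \<delta>)) 1 = 0"
    and "poly (pderiv (pderiv (Qpoly n \<gamma> \<delta>))) 1 = 2"
proof -
  define x where "x = real n"
  have "x > 1" and n1: "real (n - Suc 0) = x - 1"
    using assms by (auto simp: x_def)
  then have nz: "x \<noteq> 0" "x - 1 \<noteq> 0" "x + 1 \<noteq> 0" "x + 2 \<noteq> 0" by auto
  show "poly (Qpoly n \<gamma> \<delta>) 1 = 0"
    unfolding Qpoly_eq_monom_mult using nz
    by (simp add: poly_monom Ppoly_at_1 alpha_def beta_def divide_simps flip: x_def)
      (simp add: algebra_simps)
  show "poly (pderiv (Qpoly n \<gamma> \<delta>)) 1 = 0"
    unfolding Qpoly_eq_monom_mult pderiv_diff poly_diff poly_pderiv_monom_mult_at_1 using nz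
    by (simp add: n1 Ppoly_at_1 beta_def pderiv_pCons pderiv_add divide_simps flip: x_def)
      (simp add: algebra_simps)
  show "poly (pderiv (pderiv (Qpoly n \<gamma> \<delta>))) 1 = 2"
    unfolding Qpoly_eq_monom_mult pderiv_diff poly_diff poly_pderiv2_monom_mult_at_1 using nz
    by (simp add: n1 Ppoly_at_1 pderiv_pCons pderiv_add divide_simps flip: x_def)
      (simp add: algebra_simps)
qed

lemma Npoly_plus_Qpoly:
  assumes "n \<ge> 1"
  shows "Npoly n \<gamma> \<delta> + Qpoly n \<gamma> \<delta> = monom 1 (n - 1) * [:-1, 1:] ^ 2"
proof -
  obtain m where n: "n = Suc m" using assms by (cases n) auto
  show ?thesis unfolding Npoly_def Qpoly_def n
    by (rule poly_ext) (simp add: poly_monom algebra_simps power2_eq_square)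
qed

lemma removable_singularity_at_1:
  fixes N Q R :: "real poly"
  assumes "[:-1, 1:] ^ 3 dvd N" and "Q = [:-1, 1:] ^ 2 * R" and "poly R 1 \<noteq> 0"
  shows "\<exists>L. ((\<lambda>\<rho>. poly N \<rho> / ((1 - \<rho>) * \<rho> * poly Q \<rho>)) \<longlongrightarrow> L) (at 1)"
proof -
  obtain S where N: "N = [:-1, 1:] ^ 3 * S" using assms(1) by blast
  define G where "G \<rho> = - poly S \<rho> / (\<rho> * poly R \<rho>)" for \<rho> :: real
  have "isCont G 1" unfolding G_def using assms(3) by (intro continuous_intros) auto
  then have "(G \<longlongrightarrow> G 1) (at 1)" by (simp add: isCont_def)
  moreover have "G \<rho> = poly N \<rho> / ((1 - \<rho>) * \<rho> * poly Q \<rho>)" if "\<rho> \<noteq> 1" for \<rho>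
  proof -
    have "poly N \<rho> = (\<rho> - 1) ^ 2 * (\<rho> - 1) * poly S \<rho>"
      and "(1 - \<rho>) * \<rho> * poly Q \<rho> = (\<rho> - 1) ^ 2 * (\<rho> - 1) * - (\<rho> * poly R \<rho>)"
      by (simp_all add: N assms(2) power2_eq_square power3_eq_cube algebra_simps)
    with that show ?thesis
      by (simp only: mult.assoc mult_divide_mult_cancel_left_if) (simp add: G_def)
  qed
  then have "\<forall>\<^sub>F \<rho> in at 1. G \<rho> = poly N \<rho> / ((1 - \<rho>) * \<rho> * poly Q \<rho>)"
    by (auto simp: eventually_at_filter)
  ultimately show ?thesis by (blast intro: tendsto_cong[THEN iffD1])
qed

theorem lemma4p5:
  fixes n :: nat and \<gamma> \<delta> :: real
  assumes "n \<ge> 3"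
  shows "[:-1, 1:] ^ 3 dvd Npoly n \<gamma> \<delta>
    \<and> poly (Qpoly n \<gamma> \<delta>) 1 = 0
    \<and> poly (pderiv (Qpoly n \<gamma> \<delta>)) 1 = 0
    \<and> poly (pderiv (pderiv (Qpoly n \<gamma> \<delta>))) 1 = 2
    \<and> order 1 (Qpoly n \<gamma> \<delta>) = 2 
    \<and> (\<exists>L. ((\<lambda>\<rho>. poly (Npoly n \<gamma> \<delta>) \<rho> / ((1 - \<rho>) * \<rho> * poly (Qpoly n \<gamma> \<delta>) \<rho>))
               \<longlongrightarrow> L) (at 1))"
proof -
  note Q = Qpoly_at_1[OF assms, of \<gamma> \<delta>]
  obtain R where QR: "Qpoly n \<gamma> \<delta> = [:-1, 1:] ^ 2 * R" and "2 = 2 * poly R 1"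
    using double_root_factor[OF Q(1,2)] Q(3) by metis
  then have R1: "poly R 1 = 1" by simp
  have "Npoly n \<gamma> \<delta> = [:-1, 1:] ^ 2 * (monom 1 (n - 1) - R)"
    using Npoly_plus_Qpoly[of n \<gamma> \<delta>] assms
    by (simp only: QR right_diff_distrib mult.commute[of "monom 1 (n - 1)"] eq_diff_eq)
  moreover have "[:-1, 1:] dvd monom 1 (n - 1) - R"
    using R1 by (simp add: poly_eq_0_iff_dvd[symmetric] poly_monom)
  ultimately have N: "[:-1, 1:] ^ 3 dvd Npoly n \<gamma> \<delta>"
    by (metis mult_dvd_mono dvd_refl power_Suc2 numeral_3_eq_3 numeral_2_eq_2)
  show ?thesis
    using N Q order_square_factor[of R 1] removable_singularity_at_1[OF N QR] R1
    by (simp add: QR)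
qed

end
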